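(* Let $q$ be an acyclic Boolean conjunctive query. If the attack graph of $q$ contains a strong cycle, then it contains a strong cycle of length $2$.
   Context: Atoms $R(s_1,\dots,s_n)$ have variables or constants as arguments; each relation name has a signature $[n,k]$ with primary key positions $1,\dots,k$. $\mathit{key}(F)$ is the set of variables in the primary-key positions of atom $F$, $\mathit{vars}(F)$ the set of variables of $F$. A Boolean conjunctive query $q$ is a finite set of atoms; $\mathit{vars}(q)$ its variables. A join tree for $q$ is an undirected tree on the atoms of $q$ such that whenever a variable occurs in atoms $F$ and $G$ it occurs in every atom on the path between them; the edge between $F$ and $G$ is labeled $\mathit{vars}(F)\cap\mathit{vars}(G)$. $q$ is acyclic if it has a join tree. $\mathit{FD}(q)=\{\mathit{key}(F)\to\mathit{vars}(F)\mid F\in q\}$ (functional dependencies over variables); $F^{+,q}=\{x\in\mathit{vars}(q)\mid \mathit{FD}(q\setminus\{F\})\models\mathit{key}(F)\to x\}$; $F^{\oplus,q}=\{x\in\mathit{vars}(q)\mid \mathit{FD}(q)\models\mathit{key}(F)\to x\}$. The attack graph of $q$, computed from any join tree $\tau$ (independent of the choice), has an edge (attack) $F\to G$ for distinct atoms iff every label $L$ on the path between $F$ and $G$ in $\tau$ satisfies $L\not\subseteq F^{+,q}$. An attack $F\to G$ is weak if $\mathit{key}(G)\subseteq F^{\oplus,q}$ and strong otherwise. A cycle of length $n$ is a sequence of attacks $F_0\to F_1\to\dots\to F_{n-1}\to F_0$ with pairwise distinct $F_i$; it is strong if at least one of its attacks is strong. *)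

theory Defs
  imports Main
begin

datatype ('v, 'c) qterm = Var 'v | Cst 'c

datatype ('r, 'v, 'c) atom = Atom (rel: 'r) (args: "('v, 'c) qterm list")

text \<open>A signature assigns to each relation name a pair (n, k):
  arity n, primary key positions 1..k.\<close>
type_synonym 'r signature = "'r \<Rightarrow> nat \<times> nat"

definition wf_atom :: "'r signature \<Rightarrow> ('r, 'v, 'c) atom \<Rightarrow> bool" where
  "wf_atom sig F \<longleftrightarrow> length (args F) = fst (sig (rel F))
     \<and> 1 \<le> snd (sig (rel F)) \<and> snd (sig (rel F)) \<le> fst (sig (rel F))"

definition key :: "'r signature \<Rightarrow> ('r, 'v, 'c) atom \<Rightarrow> 'v set" where
  "key sig F = {x. \<exists>i < snd (sig (rel F)). i < length (args F) \<and> args F ! i = Var x}"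

definition vars :: "('r, 'v, 'c) atom \<Rightarrow> 'v set" where
  "vars F = {x. Var x \<in> set (args F)}"

definition qvars :: "('r, 'v, 'c) atom set \<Rightarrow> 'v set" where
  "qvars q = (\<Union>F\<in>q. vars F)"

definition bcq :: "'r signature \<Rightarrow> ('r, 'v, 'c) atom set \<Rightarrow> bool" where
  "bcq sig q \<longleftrightarrow> finite q \<and> (\<forall>F\<in>q. wf_atom sig F)"

definition tree_path :: "('a \<times> 'a) set \<Rightarrow> 'a \<Rightarrow> 'a \<Rightarrow> 'a list \<Rightarrow> bool" where
  "tree_path E F G p \<longleftrightarrow> p \<noteq> [] \<and> hd p = F \<and> last p = G \<and> distinct p
     \<and> (\<forall>i. Suc i < length p \<longrightarrow> (p ! i, p ! Suc i) \<in> E)"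

definition is_tree :: "'a set \<Rightarrow> ('a \<times> 'a) set \<Rightarrow> bool" where
  "is_tree V E \<longleftrightarrow> E \<subseteq> V \<times> V \<and> sym E \<and> irrefl E
     \<and> (\<forall>F\<in>V. \<forall>G\<in>V. \<exists>!p. tree_path E F G p)"

definition join_tree :: "('r, 'v, 'c) atom set \<Rightarrow> (('r, 'v, 'c) atom \<times> ('r, 'v, 'c) atom) set \<Rightarrow> bool" where
  "join_tree q E \<longleftrightarrow> is_tree q E
     \<and> (\<forall>F\<in>q. \<forall>G\<in>q. \<forall>x. x \<in> vars F \<and> x \<in> vars G \<longrightarrow>
          (\<forall>p. tree_path E F G p \<longrightarrow> (\<forall>H\<in>set p. x \<in> vars H)))"

definition acyclic_query :: "('r, 'v, 'c) atom set \<Rightarrow> bool" where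
  "acyclic_query q \<longleftrightarrow> (\<exists>E. join_tree q E)"

text \<open>FD(q) as a set of pairs (lhs, rhs); closure of a variable set under a set of FDs
  (FD(q) \<Turnstile> X \<rightarrow> x  iff  x is in the closure of X).\<close>
definition FD :: "'r signature \<Rightarrow> ('r, 'v, 'c) atom set \<Rightarrow> ('v set \<times> 'v set) set" where
  "FD sig q = {(key sig F, vars F) | F. F \<in> q}"

inductive_set fd_closure :: "('v set \<times> 'v set) set \<Rightarrow> 'v set \<Rightarrow> 'v set"
  for \<Sigma> :: "('v set \<times> 'v set) set" and X :: "'v set" where
  base: "x \<in> X \<Longrightarrow> x \<in> fd_closure \<Sigma> X"
| step: "(Y, Z) \<in> \<Sigma> \<Longrightarrow> (\<And>y. y \<in> Y \<Longrightarrow> y \<in> fd_closure \<Sigma> X) \<Longrightarrow> z \<in> Z \<Longrightarrow> z \<in> fd_closure \<Sigma> X"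

definition plus_closure :: "'r signature \<Rightarrow> ('r, 'v, 'c) atom set \<Rightarrow> ('r, 'v, 'c) atom \<Rightarrow> 'v set" where
  "plus_closure sig q F = {x \<in> qvars q. x \<in> fd_closure (FD sig (q - {F})) (key sig F)}"

definition oplus_closure :: "'r signature \<Rightarrow> ('r, 'v, 'c) atom set \<Rightarrow> ('r, 'v, 'c) atom \<Rightarrow> 'v set" where
  "oplus_closure sig q F = {x \<in> qvars q. x \<in> fd_closure (FD sig q) (key sig F)}"

text \<open>Attack F \<rightarrow> G, computed from a join tree of q: every label on the tree path
  between F and G is not contained in F^{+,q}.\<close>
definition attacks :: "'r signature \<Rightarrow> ('r, 'v, 'c) atom set \<Rightarrow> ('r, 'v, 'c) atom \<Rightarrow> ('r, 'v, 'c) atom \<Rightarrow> bool" where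
  "attacks sig q F G \<longleftrightarrow> F \<in> q \<and> G \<in> q \<and> F \<noteq> G \<and>
     (\<exists>E p. join_tree q E \<and> tree_path E F G p \<and>
        (\<forall>i. Suc i < length p \<longrightarrow> \<not> (vars (p ! i) \<inter> vars (p ! Suc i) \<subseteq> plus_closure sig q F)))"

definition weak_attack :: "'r signature \<Rightarrow> ('r, 'v, 'c) atom set \<Rightarrow> ('r, 'v, 'c) atom \<Rightarrow> ('r, 'v, 'c) atom \<Rightarrow> bool" where
  "weak_attack sig q F G \<longleftrightarrow> attacks sig q F G \<and> key sig G \<subseteq> oplus_closure sig q F"

definition strong_attack :: "'r signature \<Rightarrow> ('r, 'v, 'c) atom set \<Rightarrow> ('r, 'v, 'c) atom \<Rightarrow> ('r, 'v, 'c) atom \<Rightarrow> bool" where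
  "strong_attack sig q F G \<longleftrightarrow> attacks sig q F G \<and> \<not> key sig G \<subseteq> oplus_closure sig q F"

definition attack_cycle :: "'r signature \<Rightarrow> ('r, 'v, 'c) atom set \<Rightarrow> ('r, 'v, 'c) atom list \<Rightarrow> bool" where
  "attack_cycle sig q cs \<longleftrightarrow> cs \<noteq> [] \<and> distinct cs \<and>
     (\<forall>i < length cs. attacks sig q (cs ! i) (cs ! ((i + 1) mod length cs)))"

definition strong_cycle :: "'r signature \<Rightarrow> ('r, 'v, 'c) atom set \<Rightarrow> ('r, 'v, 'c) atom list \<Rightarrow> bool" where
  "strong_cycle sig q cs \<longleftrightarrow> attack_cycle sig q cs \<and>
     (\<exists>i < length cs. strong_attack sig q (cs ! i) (cs ! ((i + 1) mod length cs)))"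

end

theory Submission
  imports Defs "HOL-Library.Transitive_Closure_Table"
begin

text \<open>Acyclicity makes attacks almost transitive: if F attacks G, G attacks H and F \<noteq> H,
  then F attacks H or G attacks F. This is seen through witness sequences: F attacks G iff G is
  reachable from F through atoms sharing variables outside F^+; if G does not reach F, then
  F^+ only contains variables of G^+ or of atoms unreachable from G, so every witness
  sequence from G is also one for F.
  Weak attacks shrink the \<oplus>-closure, so if F attacks G weakly and H strongly, then any attack
  of G on H is strong.
  Starting a strong cycle at a strong attack F0 \<rightarrow> F1 \<rightarrow> F2 \<rightarrow> \<dots>, these two facts either
  yield a strong cycle of length 2 or allow dropping F2 or F1 while keeping a strong
  attack; induction on the length concludes.\<close>

definition is_cycle :: "('a \<Rightarrow> 'a \<Rightarrow> bool) \<Rightarrow> 'a list \<Rightarrow> bool" where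
  "is_cycle R cs \<longleftrightarrow> cs \<noteq> [] \<and> distinct cs \<and>
     (\<forall>i < length cs. R (cs ! i) (cs ! ((i + 1) mod length cs)))"

lemma is_cycle_iff_successively:
  "is_cycle R cs \<longleftrightarrow> cs \<noteq> [] \<and> distinct cs \<and> successively R cs \<and> R (last cs) (hd cs)"
proof (cases "cs = []")
  case False
  define n where "n = length cs"
  have n: "0 < n" using False by (simp add: n_def)
  have "(\<forall>i < n. R (cs ! i) (cs ! ((i + 1) mod n))) \<longleftrightarrow>
      (\<forall>i. Suc i < n \<longrightarrow> R (cs ! i) (cs ! Suc i)) \<and> R (cs ! (n - 1)) (cs ! 0)"
  proof (intro iffI conjI allI impI)
    fix i assume R: "\<forall>i < n. R (cs ! i) (cs ! ((i + 1) mod n))" and i: "Suc i < n"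
    have "(i + 1) mod n = Suc i" using i by simp
    then show "R (cs ! i) (cs ! Suc i)" using R i by (metis Suc_lessD)
  next
    assume R: "\<forall>i < n. R (cs ! i) (cs ! ((i + 1) mod n))"
    have "(n - 1 + 1) mod n = 0" using n by simp
    then show "R (cs ! (n - 1)) (cs ! 0)" using R[rule_format, of "n - 1"] n by simp
  next
    fix i assume R: "(\<forall>i. Suc i < n \<longrightarrow> R (cs ! i) (cs ! Suc i)) \<and> R (cs ! (n - 1)) (cs ! 0)"
      and "i < n"
    then consider "Suc i < n" | "i = n - 1" by linarith
    then show "R (cs ! i) (cs ! ((i + 1) mod n))"
      by cases (use R n in auto)
  qed
  then show ?thesis
    using False by (simp add: is_cycle_def successively_conv_nth n_def last_conv_nth hd_conv_nth)
qed (simp add: is_cycle_def)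

lemma is_cycle_Cons_Cons:
  "is_cycle R (x # y # zs) \<longleftrightarrow>
     distinct (x # y # zs) \<and> R x y \<and> successively R (y # zs) \<and> R (last (y # zs)) x"
  by (auto simp: is_cycle_iff_successively)

lemma is_cycle_rotate:
  assumes "is_cycle R cs"
  shows "is_cycle R (rotate k cs)"
  unfolding is_cycle_def
proof (intro conjI allI impI)
  let ?n = "length cs"
  fix i assume i: "i < length (rotate k cs)"
  have n: "0 < ?n" using i length_rotate[of k cs] by linarith
  have "R (cs ! ((k + i) mod ?n)) (cs ! (((k + i) mod ?n + 1) mod ?n))"
    using assms n unfolding is_cycle_def by simp
  then show "R (rotate k cs ! i) (rotate k cs ! ((i + 1) mod length (rotate k cs)))"
    using i n by (auto simp: nth_rotate mod_add_right_eq mod_Suc_eq add.assoc)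
qed (use assms in \<open>auto simp: is_cycle_def\<close>)

lemma cycle_imp_two_cycle_Cons:
  assumes A_trans: "\<And>x y z. A x y \<Longrightarrow> A y z \<Longrightarrow> x \<noteq> z \<Longrightarrow> A x z \<or> A y x"
    and S_transfer: "\<And>x y z. A x y \<Longrightarrow> \<not> S x y \<Longrightarrow> S x z \<Longrightarrow> A y z \<Longrightarrow> S y z"
  shows "is_cycle A (x # y # zs) \<Longrightarrow> S x y \<Longrightarrow> \<exists>u v. S u v \<and> A v u"
proof (induction zs arbitrary: y)
  case Nil
  then show ?case by (auto simp: is_cycle_Cons_Cons)
next
  case (Cons z zs)
  then have Axy: "A x y" and Ayz: "A y z" and "x \<noteq> z"
    by (auto simp: is_cycle_Cons_Cons)
  consider "A y x" | "A x z" "S x z" | "A x z" "\<not> S x z"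
    using A_trans[OF Axy Ayz \<open>x \<noteq> z\<close>] by blast
  then show ?case
  proof cases
    case 1
    with Cons.prems show ?thesis by blast
  next
    case 2
    then have "is_cycle A (x # z # zs)"
      using Cons.prems by (auto simp: is_cycle_Cons_Cons)
    then show ?thesis using Cons.IH \<open>S x z\<close> by blast
  next
    case 3
    define w where "w = hd (zs @ [x])" \<comment> \<open>the successor of z on the cycle\<close>
    have Azw: "A z w" and "y \<noteq> w"
      using Cons.prems by (cases zs; auto simp: is_cycle_Cons_Cons w_def)+
    consider "A z y" | "A y w"
      using A_trans[OF Ayz Azw \<open>y \<noteq> w\<close>] by blast
    then show ?thesis
    proof cases
      case 1
      then have "S z y" using S_transfer 3 Cons.prems(2) by blast
      with Ayz show ?thesis by blast
    next
      case 2
      then have "is_cycle A (x # y # zs)"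
        using Cons.prems by (cases zs; auto simp: is_cycle_Cons_Cons w_def)
      then show ?thesis using Cons.IH Cons.prems(2) by blast
    qed
  qed
qed

lemma cycle_imp_two_cycle:
  assumes A_trans: "\<And>x y z. A x y \<Longrightarrow> A y z \<Longrightarrow> x \<noteq> z \<Longrightarrow> A x z \<or> A y x"
    and S_transfer: "\<And>x y z. A x y \<Longrightarrow> \<not> S x y \<Longrightarrow> S x z \<Longrightarrow> A y z \<Longrightarrow> S y z"
    and irrefl: "\<And>x. \<not> A x x" and S_imp_A: "\<And>x y. S x y \<Longrightarrow> A x y"
    and cycle: "is_cycle A cs" and i: "i < length cs"
    and S: "S (cs ! i) (cs ! ((i + 1) mod length cs))"
  shows "\<exists>u v. S u v \<and> A v u"
proof -
  define ys where "ys = rotate i cs"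
  have ys_cycle: "is_cycle A ys" using cycle by (simp add: ys_def is_cycle_rotate)
  have "(i + 1) mod length cs \<noteq> i" using S irrefl S_imp_A by metis
  then have "2 \<le> length ys" using i by (cases "length cs = 1") (auto simp: ys_def)
  then obtain x y zs where ys: "ys = x # y # zs"
    by (metis One_nat_def Suc_1 Suc_le_length_iff)
  have "0 < length cs" "1 < length cs"
    using \<open>2 \<le> length ys\<close> unfolding ys_def length_rotate by linarith+
  then have "ys ! 0 = cs ! i" "ys ! 1 = cs ! ((i + 1) mod length cs)"
    unfolding ys_def using i by (simp_all only: nth_rotate) simp
  with S have "S x y" by (simp add: ys)
  have "is_cycle A (x # y # zs)" using ys_cycle ys by simp
  with A_trans S_transfer show ?thesis
    using \<open>S x y\<close> by (rule cycle_imp_two_cycle_Cons)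
qed

lemma rtrancl_path_iff_successively:
  "rtrancl_path R x xs y \<longleftrightarrow> successively R (x # xs) \<and> last (x # xs) = y"
proof (induction xs arbitrary: x)
  case Nil
  then show ?case by (auto elim: rtrancl_path.cases intro: rtrancl_path.base)
next
  case (Cons z zs)
  then show ?case by (auto elim: rtrancl_path.cases intro: rtrancl_path.step)
qed

lemma tree_path_conv_rtrancl_path:
  "tree_path E F G p \<and> (\<forall>i. Suc i < length p \<longrightarrow> P (p ! i) (p ! Suc i)) \<longleftrightarrow>
   (\<exists>xs. p = F # xs \<and> distinct p \<and> rtrancl_path (\<lambda>a b. (a, b) \<in> E \<and> P a b) F xs G)"
proof (cases p)
  case (Cons a xs)
  then show ?thesis
    unfolding tree_path_def rtrancl_path_iff_successively successively_conv_nth by auto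
qed (simp add: tree_path_def)

lemma fd_closure_trans: "Y \<subseteq> fd_closure \<Sigma> X \<Longrightarrow> fd_closure \<Sigma> Y \<subseteq> fd_closure \<Sigma> X"
proof
  fix x assume Y: "Y \<subseteq> fd_closure \<Sigma> X" and "x \<in> fd_closure \<Sigma> Y"
  from this(2) show "x \<in> fd_closure \<Sigma> X"
    by (induction rule: fd_closure.induct) (use Y in \<open>auto intro: fd_closure.step\<close>)
qed

lemma key_subset_vars: "key sig F \<subseteq> vars F"
  unfolding key_def vars_def by (auto dest: nth_mem)

lemma vars_subset_qvars: "F \<in> q \<Longrightarrow> vars F \<subseteq> qvars q"
  unfolding qvars_def by blast

lemma vars_subset_plus_closure:
  assumes "G \<in> q" "G \<noteq> F" "key sig G \<subseteq> plus_closure sig q F"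
  shows "vars G \<subseteq> plus_closure sig q F"
proof -
  have "(key sig G, vars G) \<in> FD sig (q - {F})" using assms(1,2) by (auto simp: FD_def)
  then show ?thesis
    using assms(3) vars_subset_qvars[OF assms(1)]
    by (auto simp: plus_closure_def intro: fd_closure.step)
qed

lemma oplus_closure_mono:
  "key sig G \<subseteq> oplus_closure sig q F \<Longrightarrow> oplus_closure sig q G \<subseteq> oplus_closure sig q F"
  unfolding oplus_closure_def using fd_closure_trans[of "key sig G" "FD sig q" "key sig F"] by blast

definition witness_step ::
  "'r signature \<Rightarrow> ('r, 'v, 'c) atom set \<Rightarrow> ('r, 'v, 'c) atom \<Rightarrow> ('r, 'v, 'c) atom \<Rightarrow> ('r, 'v, 'c) atom \<Rightarrow> bool"
  where "witness_step sig q F G H \<longleftrightarrow> G \<in> q \<and> H \<in> q \<and> \<not> vars G \<inter> vars H \<subseteq> plus_closure sig q F"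

lemma witness_step_rtranclp_join_tree_edges:
  assumes E: "join_tree q E" and step: "witness_step sig q F Y Z"
  shows "(\<lambda>a b. (a, b) \<in> E \<and> \<not> vars a \<inter> vars b \<subseteq> plus_closure sig q F)\<^sup>*\<^sup>* Y Z"
proof -
  obtain x where Y: "Y \<in> q" and Z: "Z \<in> q" and x: "x \<in> vars Y" "x \<in> vars Z"
    and x_notin: "x \<notin> plus_closure sig q F"
    using step unfolding witness_step_def by blast
  obtain p where p: "tree_path E Y Z p"
    using E Y Z unfolding join_tree_def is_tree_def by (meson ex1E)
  have x_on_path: "x \<in> vars H" if "H \<in> set p" for H
    using E Y Z x p that unfolding join_tree_def by blast
  have "\<forall>i. Suc i < length p \<longrightarrow> \<not> vars (p ! i) \<inter> vars (p ! Suc i) \<subseteq> plus_closure sig q F"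
  proof (intro allI impI)
    fix i assume "Suc i < length p"
    then have "x \<in> vars (p ! i) \<inter> vars (p ! Suc i)" by (simp add: x_on_path)
    with x_notin show "\<not> vars (p ! i) \<inter> vars (p ! Suc i) \<subseteq> plus_closure sig q F" by blast
  qed
  with p have "\<exists>xs. p = Y # xs \<and> distinct p \<and>
      rtrancl_path (\<lambda>a b. (a, b) \<in> E \<and> \<not> vars a \<inter> vars b \<subseteq> plus_closure sig q F) Y xs Z"
    by (intro tree_path_conv_rtrancl_path[THEN iffD1] conjI)
  then show ?thesis by (auto simp: rtranclp_eq_rtrancl_path)
qed

lemma attacks_iff_witness:
  assumes E: "join_tree q E"
  shows "attacks sig q F G \<longleftrightarrow> F \<in> q \<and> G \<in> q \<and> F \<noteq> G \<and> (witness_step sig q F)\<^sup>*\<^sup>* F G"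
proof (intro iffI conjI)
  assume "attacks sig q F G"
  then obtain E' p where "F \<in> q" "G \<in> q" "F \<noteq> G" "join_tree q E'" and path: "tree_path E' F G p"
    and labels: "\<forall>i. Suc i < length p \<longrightarrow> \<not> vars (p ! i) \<inter> vars (p ! Suc i) \<subseteq> plus_closure sig q F"
    unfolding attacks_def by blast
  then show "F \<in> q" "G \<in> q" "F \<noteq> G" by blast+
  let ?edge = "\<lambda>a b. (a, b) \<in> E' \<and> \<not> vars a \<inter> vars b \<subseteq> plus_closure sig q F"
  have "\<exists>xs. p = F # xs \<and> distinct p \<and> rtrancl_path ?edge F xs G"
    using path labels by (intro tree_path_conv_rtrancl_path[THEN iffD1] conjI)
  then have "?edge\<^sup>*\<^sup>* F G" by (auto simp: rtranclp_eq_rtrancl_path)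
  moreover have "?edge \<le> witness_step sig q F"
    using \<open>join_tree q E'\<close> by (auto simp: join_tree_def is_tree_def witness_step_def)
  ultimately show "(witness_step sig q F)\<^sup>*\<^sup>* F G"
    using rtranclp_mono by blast
next
  let ?edge = "\<lambda>a b. (a, b) \<in> E \<and> \<not> vars a \<inter> vars b \<subseteq> plus_closure sig q F"
  assume "F \<in> q \<and> G \<in> q \<and> F \<noteq> G \<and> (witness_step sig q F)\<^sup>*\<^sup>* F G"
  then have "F \<in> q" "G \<in> q" "F \<noteq> G" and "(witness_step sig q F)\<^sup>*\<^sup>* F G" by blast+
  from this(4) have "?edge\<^sup>*\<^sup>* F G"
    by (induction rule: rtranclp_induct)
      (auto intro: rtranclp_trans witness_step_rtranclp_join_tree_edges[OF E])
  then obtain xs where "rtrancl_path ?edge F xs G" "distinct (F # xs)"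
    unfolding rtranclp_eq_rtrancl_path by (blast elim: rtrancl_path_distinct)
  then have "tree_path E F G (F # xs) \<and>
      (\<forall>i. Suc i < length (F # xs) \<longrightarrow> \<not> vars ((F # xs) ! i) \<inter> vars ((F # xs) ! Suc i) \<subseteq> plus_closure sig q F)"
    by (intro tree_path_conv_rtrancl_path[THEN iffD2]) blast
  then show "attacks sig q F G"
    using E \<open>F \<in> q\<close> \<open>G \<in> q\<close> \<open>F \<noteq> G\<close> unfolding attacks_def by blast
qed

lemma key_not_subset_plus_closure:
  assumes "(witness_step sig q F)\<^sup>*\<^sup>* F G" "F \<noteq> G"
  shows "\<not> key sig G \<subseteq> plus_closure sig q F"
proof
  assume key: "key sig G \<subseteq> plus_closure sig q F"
  obtain Y where "witness_step sig q F Y G"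
    using assms by (metis rtranclp.cases)
  then have "G \<in> q" and "\<not> vars Y \<inter> vars G \<subseteq> plus_closure sig q F"
    by (auto simp: witness_step_def)
  moreover have "vars G \<subseteq> plus_closure sig q F"
    using vars_subset_plus_closure[OF \<open>G \<in> q\<close> assms(2)[symmetric] key] .
  ultimately show False by blast
qed

definition witness_component :: "'r signature \<Rightarrow> ('r, 'v, 'c) atom set \<Rightarrow> ('r, 'v, 'c) atom \<Rightarrow> ('r, 'v, 'c) atom set"
  where "witness_component sig q G = {X. (witness_step sig q G)\<^sup>*\<^sup>* G X}"

lemma witness_component_closed:
  assumes "K \<in> witness_component sig q G" "K \<in> q" "X \<in> q"
    and "y \<in> vars K" "y \<in> vars X" "y \<notin> plus_closure sig q G"
  shows "X \<in> witness_component sig q G"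
proof -
  have "witness_step sig q G K X" using assms(2-) by (auto simp: witness_step_def)
  with assms(1) show ?thesis
    by (auto simp: witness_component_def intro: rtranclp.rtrancl_into_rtrancl)
qed

lemma plus_closure_subset_outside_component:
  assumes F: "F \<in> q" "F \<notin> witness_component sig q G"
    and key_G: "\<not> key sig G \<subseteq> plus_closure sig q F"
  shows "plus_closure sig q F \<subseteq>
    plus_closure sig q G \<union> (\<Union>X \<in> q - witness_component sig q G. vars X)"
    (is "_ \<subseteq> ?W")
proof -
  have "x \<in> ?W" if "x \<in> fd_closure (FD sig (q - {F})) (key sig F)" for x
    using that
  proof (induction rule: fd_closure.induct)
    case (base x)
    then show ?case using F key_subset_vars[of sig F] by blast
  next
    case (step Y Z z)
    obtain K where K: "Y = key sig K" "Z = vars K" "K \<in> q" "K \<noteq> F"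
      using step.hyps(1) unfolding FD_def by blast
    show ?case
    proof (cases "K \<in> witness_component sig q G")
      case False
      with K step.hyps(3) show ?thesis by blast
    next
      case True
      have "K \<noteq> G"
      proof
        assume "K = G"
        then have "key sig G \<subseteq> fd_closure (FD sig (q - {F})) (key sig F)"
          using step.hyps(2) K(1) by blast
        moreover have "key sig G \<subseteq> qvars q"
          using \<open>K = G\<close> K(3) key_subset_vars[of sig G] vars_subset_qvars[of G q] by blast
        ultimately have "key sig G \<subseteq> plus_closure sig q F"
          unfolding plus_closure_def by blast
        with key_G show False ..
      qed
      have "y \<in> plus_closure sig q G" if y: "y \<in> key sig K" for y
      proof (rule ccontr)
        assume y_notin: "y \<notin> plus_closure sig q G"
        then obtain X where "X \<in> q" "X \<notin> witness_component sig q G" "y \<in> vars X"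
          using step.IH[of y] K(1) y by blast
        moreover have "y \<in> vars K" using y key_subset_vars[of sig K] by blast
        ultimately show False
          using witness_component_closed[OF True \<open>K \<in> q\<close> \<open>X \<in> q\<close> _ _ y_notin] by blast
      qed
      then have "vars K \<subseteq> plus_closure sig q G"
        by (intro vars_subset_plus_closure[OF \<open>K \<in> q\<close> \<open>K \<noteq> G\<close>] subsetI)
      with K step.hyps(3) show ?thesis by blast
    qed
  qed
  then show ?thesis unfolding plus_closure_def by blast
qed

lemma witness_reach_through:
  assumes "F \<in> q" and FG: "(witness_step sig q F)\<^sup>*\<^sup>* F G" "F \<noteq> G"
    and GF: "\<not> (witness_step sig q G)\<^sup>*\<^sup>* G F" and GH: "(witness_step sig q G)\<^sup>*\<^sup>* G H"
  shows "(witness_step sig q F)\<^sup>*\<^sup>* F H"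
proof -
  let ?D = "witness_component sig q G"
  have bound: "plus_closure sig q F \<subseteq> plus_closure sig q G \<union> (\<Union>X \<in> q - ?D. vars X)"
    using plus_closure_subset_outside_component[OF \<open>F \<in> q\<close>] key_not_subset_plus_closure[OF FG] GF
    by (simp add: witness_component_def)
  have F_step: "witness_step sig q F Y Z" if G_step: "witness_step sig q G Y Z" and "Z \<in> ?D" for Y Z
  proof -
    obtain x where "Y \<in> q" "Z \<in> q" "x \<in> vars Y" "x \<in> vars Z" "x \<notin> plus_closure sig q G"
      using G_step unfolding witness_step_def by blast
    moreover have "x \<notin> plus_closure sig q F"
    proof
      assume "x \<in> plus_closure sig q F"
      with bound \<open>x \<notin> plus_closure sig q G\<close> obtain X where "X \<in> q" "X \<notin> ?D" "x \<in> vars X"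
        by blast
      with witness_component_closed[OF \<open>Z \<in> ?D\<close> \<open>Z \<in> q\<close>] \<open>x \<in> vars Z\<close> \<open>x \<notin> plus_closure sig q G\<close>
      show False by blast
    qed
    ultimately show ?thesis by (auto simp: witness_step_def)
  qed
  from GH show ?thesis
  proof (induction rule: rtranclp_induct)
    case base
    show ?case using FG(1) .
  next
    case (step Y Z)
    then have "Z \<in> ?D" by (auto simp: witness_component_def)
    with step show ?case by (blast intro: rtranclp.rtrancl_into_rtrancl F_step)
  qed
qed

lemma attacks_trans_or_back:
  assumes "acyclic_query q" and FG: "attacks sig q F G" and GH: "attacks sig q G H" and "F \<noteq> H"
  shows "attacks sig q F H \<or> attacks sig q G F"
proof (rule disjCI)
  assume "\<not> attacks sig q G F"
  obtain E where E: "join_tree q E" using assms(1) unfolding acyclic_query_def by blast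
  have "F \<in> q" "G \<in> q" "H \<in> q" "F \<noteq> G"
    and reach_FG: "(witness_step sig q F)\<^sup>*\<^sup>* F G" and reach_GH: "(witness_step sig q G)\<^sup>*\<^sup>* G H"
    using FG GH unfolding attacks_iff_witness[OF E] by blast+
  moreover have "\<not> (witness_step sig q G)\<^sup>*\<^sup>* G F"
    using \<open>\<not> attacks sig q G F\<close> \<open>F \<in> q\<close> \<open>G \<in> q\<close> \<open>F \<noteq> G\<close>
    unfolding attacks_iff_witness[OF E] by blast
  ultimately have "(witness_step sig q F)\<^sup>*\<^sup>* F H"
    using witness_reach_through[OF \<open>F \<in> q\<close> reach_FG \<open>F \<noteq> G\<close>] by blast
  with \<open>F \<in> q\<close> \<open>H \<in> q\<close> \<open>F \<noteq> H\<close> show "attacks sig q F H"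
    unfolding attacks_iff_witness[OF E] by blast
qed

lemma strong_attack_transfer:
  assumes "attacks sig q F G" "\<not> strong_attack sig q F G" "strong_attack sig q F H" "attacks sig q G H"
  shows "strong_attack sig q G H"
  using assms oplus_closure_mono[of sig G q F] unfolding strong_attack_def by blast

theorem lemma4:
  fixes sig :: "'r signature" and q :: "('r, 'v, 'c) atom set"
  assumes "bcq sig q"
    and "acyclic_query q"
    and "\<exists>cs. strong_cycle sig q cs"
  shows "\<exists>cs. strong_cycle sig q cs \<and> length cs = 2"
proof -
  obtain cs i where cycle: "is_cycle (attacks sig q) cs" and i: "i < length cs"
    and strong: "strong_attack sig q (cs ! i) (cs ! ((i + 1) mod length cs))"
    using assms(3) unfolding strong_cycle_def attack_cycle_def is_cycle_def by blast
  have irrefl: "\<not> attacks sig q F F" for F by (simp add: attacks_def)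
  have strong_imp_attacks: "attacks sig q F G" if "strong_attack sig q F G" for F G
    using that by (simp add: strong_attack_def)
  have "\<exists>F G. strong_attack sig q F G \<and> attacks sig q G F"
    using attacks_trans_or_back[OF assms(2)] strong_attack_transfer irrefl strong_imp_attacks
      cycle i strong
    by (rule cycle_imp_two_cycle)
  then obtain F G where FG: "strong_attack sig q F G" and GF: "attacks sig q G F" by blast
  then have "F \<noteq> G" using irrefl by blast
  with FG GF strong_imp_attacks have "attack_cycle sig q [F, G]"
    by (auto simp: attack_cycle_def less_Suc_eq)
  with FG have "strong_cycle sig q [F, G]"
    unfolding strong_cycle_def by (intro conjI exI[of _ 0]) simp_all
  then show ?thesis by (intro exI[of _ "[F, G]"]) simp
qed

end
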